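(* Let $|\psi\rangle=\sum_{i_1,\dots,i_N}\mathrm{Tr}[A^{[1],i_1}\cdots A^{[N],i_N}]|i_1\dots i_N\rangle$ be a (not necessarily translationally invariant) MPS on a sufficiently large number $N$ of sites in which every tensor $A^{[n]}$ is injective, and suppose $|\psi\rangle$ has the exact MPS-up$_{0,D}$ property. Then $\prod_{i=i_0}^{N}D_{[i]}\le D$, where $i_0=1$ if $N$ is even and $i_0=2$ if $N$ is odd (so $|\psi\rangle$ is a product over almost all sites).
   Context: Here $A^{[n],i}$ ($i=1,\dots,d$) are $D_{[n]}\times D_{[n+1]}$ complex matrices with $D_{[N+1]}=D_{[1]}$; thus $D_{[n]}$ is the dimension of the virtual bond between site $n-1$ and site $n$ (cyclically). The tensor $A^{[n]}$ is injective if the linear map $X\mapsto\sum_{i=1}^d\mathrm{Tr}[XA^{[n],i}]|i\rangle$ from $\mathcal{M}_{D_{[n+1]}\times D_{[n]}}(\mathbb{C})$ to $\mathbb{C}^d$ is injective (equivalently, it has a left inverse). A state is an exact MPS-up$_{0,D}$ if for every permutation $\pi$ of its $N$ sites, $U_\pi|\psi\rangle$ (with $U_\pi$ the unitary permuting the tensor factors) is equal to an MPS with bond dimensions at most $D$; equivalently, its Schmidt rank across every bipartition of the sites is at most $D$. *)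

theory Defs
  imports "Jordan_Normal_Form.Matrix"
begin

text \<open>Sites are indexed 0,...,N-1 (site n here is site n+1 of the paper).
  Dim n is the bond dimension to the left of site n, i.e. Dim n = D_[n+1];
  the bond to the right of site n is Dim ((n+1) mod N).
  A n i is the D_[n] x D_[n+1] matrix A^[n],i, for physical index i < d.\<close>

definition mps_tensors_ok ::
  "nat \<Rightarrow> nat \<Rightarrow> (nat \<Rightarrow> nat) \<Rightarrow> (nat \<Rightarrow> nat \<Rightarrow> complex mat) \<Rightarrow> bool" where
  "mps_tensors_ok N d Dim A \<longleftrightarrow>
     (\<forall>n<N. \<forall>i<d. A n i \<in> carrier_mat (Dim n) (Dim (Suc n mod N)))"

definition mat_trace :: "complex mat \<Rightarrow> complex" where
  "mat_trace M = (\<Sum>i<dim_row M. M $$ (i, i))"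

definition mps_coeff ::
  "nat \<Rightarrow> (nat \<Rightarrow> nat) \<Rightarrow> (nat \<Rightarrow> nat \<Rightarrow> complex mat) \<Rightarrow> (nat \<Rightarrow> nat) \<Rightarrow> complex" where
  "mps_coeff N Dim A idx = mat_trace (foldl (\<lambda>M k. M * A k (idx k)) (1\<^sub>m (Dim 0)) [0..<N])"

definition injective_tensor ::
  "nat \<Rightarrow> nat \<Rightarrow> (nat \<Rightarrow> nat) \<Rightarrow> (nat \<Rightarrow> nat \<Rightarrow> complex mat) \<Rightarrow> nat \<Rightarrow> bool" where
  "injective_tensor N d Dim A n \<longleftrightarrow>
     (\<forall>X \<in> carrier_mat (Dim (Suc n mod N)) (Dim n).
        (\<forall>i<d. mat_trace (X * A n i) = 0) \<longrightarrow> X = 0\<^sub>m (Dim (Suc n mod N)) (Dim n))"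

definition restr :: "nat set \<Rightarrow> (nat \<Rightarrow> nat) \<Rightarrow> (nat \<Rightarrow> nat)" where
  "restr S idx = (\<lambda>k. if k \<in> S then idx k else 0)"

definition schmidt_rank_le ::
  "nat \<Rightarrow> nat \<Rightarrow> ((nat \<Rightarrow> nat) \<Rightarrow> complex) \<Rightarrow> nat set \<Rightarrow> nat \<Rightarrow> bool" where
  "schmidt_rank_le N d psi S r \<longleftrightarrow>
     (\<exists>f g :: nat \<Rightarrow> (nat \<Rightarrow> nat) \<Rightarrow> complex.
        \<forall>idx. (\<forall>k<N. idx k < d) \<longrightarrow>
          psi idx = (\<Sum>j<r. f j (restr S idx) * g j (restr ({0..<N} - S) idx)))"

definition exact_MPS_up ::
  "nat \<Rightarrow> nat \<Rightarrow> ((nat \<Rightarrow> nat) \<Rightarrow> complex) \<Rightarrow> nat \<Rightarrow> bool" where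
  "exact_MPS_up N d psi D \<longleftrightarrow> (\<forall>S \<subseteq> {0..<N}. schmidt_rank_le N d psi S D)"

end

(* Split the sites into even and odd ones. For two virtual configurations t and s (one bond
   index per site), injectivity provides at every site a physical vector on which the tensor
   evaluates to a matrix unit E_ab, with a and b read off t at even sites and off s at odd sites.
   Contracting psi with the product of these vectors gives the trace of a product of matrix
   units, which is 1 exactly when the indices chain up around the ring, i.e. when t = s.
   A Schmidt decomposition of rank at most D across the even/odd bipartition writes the same
   contraction as sum_{j<D} F_j(t) G_j(s). So the identity matrix indexed by configurations
   factors through dimension D, and their number, the product of the bond dimensions, is at
   most D. *)

theory Submission
  imports Defs "HOL-Library.Function_Algebras"
begin

section \<open>Biorthogonal families of coordinate vectors\<close>

lemma (in vector_space) independent_image_if_scalars_zero: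
  fixes y :: "'u \<Rightarrow> 'b"
  assumes "finite U"
    and zero: "\<And>c. (\<Sum>u\<in>U. c u *s y u) = 0 \<Longrightarrow> \<forall>u\<in>U. c u = 0"
  shows "inj_on y U" and "independent (y ` U)"
proof -
  show inj: "inj_on y U"
  proof (rule inj_onI, rule ccontr)
    fix u u' assume uu': "u \<in> U" "u' \<in> U" "y u = y u'" "u \<noteq> u'"
    define c :: "'u \<Rightarrow> 'a" where "c w = (if w = u then 1 else if w = u' then -1 else 0)" for w
    have "(\<Sum>w\<in>U. c w *s y w) = (\<Sum>w\<in>{u, u'}. c w *s y w)"
      using \<open>finite U\<close> uu'(1,2) by (intro sum.mono_neutral_right) (auto simp: c_def)
    also have "\<dots> = 0"
      using uu'(3,4) by (simp add: c_def)
    finally have "c u = 0"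
      using zero uu'(1) by blast
    then show False
      by (simp add: c_def)
  qed
  show "independent (y ` U)"
  proof (rule independent_if_scalars_zero)
    fix f v assume "(\<Sum>x\<in>y ` U. f x *s x) = 0" "v \<in> y ` U"
    then show "f v = 0"
      using zero[of "f \<circ> y"] by (auto simp: sum.reindex[OF inj])
  qed (use \<open>finite U\<close> in simp)
qed

definition fun_scale :: "'a::field \<Rightarrow> ('i \<Rightarrow> 'a) \<Rightarrow> 'i \<Rightarrow> 'a" where
  "fun_scale c v = (\<lambda>i. c * v i)"

interpretation fun_space: vector_space fun_scale
  by unfold_locales (auto simp: fun_scale_def fun_eq_iff algebra_simps)

interpretation fun_space_dual: vector_space_pair fun_scale "(*) :: 'a::field \<Rightarrow> 'a \<Rightarrow> 'a"
  by unfold_locales (auto simp: fun_scale_def fun_eq_iff algebra_simps)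

lemma sum_fun_apply: "sum f A x = (\<Sum>a\<in>A. f a x)"
  by (induct A rule: infinite_finite_induct) auto

lemma fun_eq_sum_coordinates:
  fixes v :: "nat \<Rightarrow> 'a::field"
  assumes "\<forall>j\<ge>D. v j = 0"
  shows "v = (\<Sum>j<D. fun_scale (v j) (0(j := 1)))"
proof
  fix i
  have "(\<Sum>j<D. fun_scale (v j) (0(j := 1))) i = (\<Sum>j<D. if j = i then v i else 0)"
    by (intro trans[OF sum_fun_apply] sum.cong) (auto simp: fun_scale_def)
  then show "v i = (\<Sum>j<D. fun_scale (v j) (0(j := 1))) i"
    using assms by (auto simp: not_less)
qed

lemma card_le_if_biorthogonal:
  fixes F G :: "nat \<Rightarrow> 'b \<Rightarrow> 'a::field"
  assumes "finite T"
    and delta: "\<And>t s. t \<in> T \<Longrightarrow> s \<in> T \<Longrightarrow> (\<Sum>j<D. F j t * G j s) = (if t = s then 1 else 0)"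
  shows "card T \<le> D"
proof -
  define x where "x t = (\<lambda>j. if j < D then F j t else 0)" for t
  have scalars_zero: "\<forall>s\<in>T. c s = 0" if "(\<Sum>t\<in>T. fun_scale (c t) (x t)) = 0" for c
  proof
    fix s assume "s \<in> T"
    have "c s = (\<Sum>t\<in>T. if t = s then c t else 0)"
      using \<open>finite T\<close> \<open>s \<in> T\<close> by simp
    also have "\<dots> = (\<Sum>t\<in>T. c t * (\<Sum>j<D. F j t * G j s))"
      using \<open>s \<in> T\<close> by (intro sum.cong refl) (simp add: delta)
    also have "\<dots> = (\<Sum>t\<in>T. \<Sum>j<D. c t * (F j t * G j s))"
      by (simp only: sum_distrib_left)
    also have "\<dots> = (\<Sum>j<D. \<Sum>t\<in>T. c t * (F j t * G j s))"
      by (rule sum.swap)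
    also have "\<dots> = (\<Sum>j<D. (\<Sum>t\<in>T. c t * F j t) * G j s)"
      by (simp only: sum_distrib_right mult.assoc)
    also have "\<dots> = (\<Sum>j<D. (\<Sum>t\<in>T. fun_scale (c t) (x t)) j * G j s)"
      by (intro sum.cong refl) (simp add: sum_fun_apply fun_scale_def x_def)
    finally show "c s = 0"
      using that by simp
  qed
  have x: "inj_on x T" "fun_space.independent (x ` T)"
    by (intro fun_space.independent_image_if_scalars_zero[OF \<open>finite T\<close>] scalars_zero; assumption)+
  have "x ` T \<subseteq> fun_space.span ((\<lambda>j. 0(j := 1)) ` {..<D})"
  proof
    fix v assume "v \<in> x ` T"
    then have "v = (\<Sum>j<D. fun_scale (v j) (0(j := 1)))"
      by (intro fun_eq_sum_coordinates) (auto simp: x_def)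
    also have "\<dots> \<in> fun_space.span ((\<lambda>j. 0(j := 1)) ` {..<D})"
      by (intro fun_space.span_sum fun_space.span_scale fun_space.span_base) auto
    finally show "v \<in> fun_space.span ((\<lambda>j. 0(j := 1)) ` {..<D})" .
  qed
  then have "card (x ` T) \<le> card ((\<lambda>j. 0(j := 1)) ` {..<D} :: (nat \<Rightarrow> 'a) set)"
    using fun_space.independent_span_bound x(2)
    by blast
  also have "\<dots> \<le> D"
    using card_image_le[of "{..<D}"] by simp
  finally show ?thesis
    by (simp add: card_image[OF x(1)])
qed

lemma exists_dual_vector:
  fixes a :: "'u \<Rightarrow> nat \<Rightarrow> 'a::field"
  assumes "finite U" and "u0 \<in> U"
    and zero: "\<And>c. \<forall>i<d. (\<Sum>u\<in>U. c u * a u i) = 0 \<Longrightarrow> \<forall>u\<in>U. c u = 0"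
  shows "\<exists>c. \<forall>u\<in>U. (\<Sum>i<d. c i * a u i) = (if u = u0 then 1 else 0)"
proof -
  define y where "y u = (\<lambda>i. if i < d then a u i else 0)" for u
  have scalars_zero: "\<forall>u\<in>U. c u = 0" if "(\<Sum>u\<in>U. fun_scale (c u) (y u)) = 0" for c
  proof (rule zero, intro allI impI)
    fix i assume "i < d"
    then show "(\<Sum>u\<in>U. c u * a u i) = 0"
      using fun_cong[OF that, of i] by (simp add: sum_fun_apply fun_scale_def y_def)
  qed
  have y: "inj_on y U" "fun_space.independent (y ` U)"
    by (intro fun_space.independent_image_if_scalars_zero[OF \<open>finite U\<close>] scalars_zero; assumption)+
  obtain g where g: "Vector_Spaces.linear fun_scale (*) g"
    and g_y: "\<forall>v\<in>y ` U. g v = (if v = y u0 then 1 else 0)"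
    using fun_space_dual.linear_independent_extend[OF y(2), of "\<lambda>v. if v = y u0 then 1 else 0"] by blast
  show ?thesis
  proof (intro exI ballI)
    fix u assume "u \<in> U"
    have "(\<Sum>i<d. g (0(i := 1)) * a u i) = g (\<Sum>i<d. fun_scale (y u i) (0(i := 1)))"
      by (simp add: fun_space_dual.linear_sum[OF g] fun_space_dual.linear_scale[OF g] y_def mult.commute)
    also have "\<dots> = g (y u)"
      by (subst (2) fun_eq_sum_coordinates[of d "y u"]) (auto simp: y_def)
    also have "\<dots> = (if u = u0 then 1 else 0)"
      using g_y \<open>u \<in> U\<close> \<open>u0 \<in> U\<close> inj_on_eq_iff[OF y(1)] by auto
    finally show "(\<Sum>i<d. g (0(i := 1)) * a u i) = (if u = u0 then 1 else 0)" .
  qed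
qed

section \<open>Products of matrix units and of linear combinations\<close>

lemma sum_PiE_lessThan_Suc:
  "(\<Sum>idx\<in>PiE {..<Suc m} (\<lambda>_. B). f idx) = (\<Sum>i\<in>B. \<Sum>idx\<in>PiE {..<m} (\<lambda>_. B). f (idx(m := i)))"
proof -
  have "PiE {..<Suc m} (\<lambda>_. B) = (\<lambda>(i, idx). idx(m := i)) ` (B \<times> PiE {..<m} (\<lambda>_. B))"
    by (simp add: PiE_insert_eq lessThan_Suc)
  moreover have "inj_on (\<lambda>(i, idx). idx(m := i)) (B \<times> PiE {..<m} (\<lambda>_. B))"
    by (rule inj_combinator) simp
  ultimately have "(\<Sum>idx\<in>PiE {..<Suc m} (\<lambda>_. B). f idx) = (\<Sum>(i, idx)\<in>B \<times> PiE {..<m} (\<lambda>_. B). f (idx(m := i)))"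
    by (simp add: sum.reindex case_prod_unfold)
  then show ?thesis
    by (simp add: sum.cartesian_product)
qed

definition mat_unit :: "nat \<Rightarrow> nat \<Rightarrow> nat \<Rightarrow> nat \<Rightarrow> 'a::zero_neq_one mat" where
  "mat_unit p q a b = mat p q (\<lambda>(x, y). if x = a \<and> y = b then 1 else 0)"

definition mat_lincomb :: "nat \<Rightarrow> nat \<Rightarrow> (nat \<Rightarrow> 'a::comm_semiring_1) \<Rightarrow> (nat \<Rightarrow> 'a mat) \<Rightarrow> nat \<Rightarrow> 'a mat" where
  "mat_lincomb p q w M d = mat p q (\<lambda>(x, y). \<Sum>i<d. w i * M i $$ (x, y))"

lemma index_mult_mat_sum:
  assumes "A \<in> carrier_mat a b" "B \<in> carrier_mat b c" "i < a" "j < c"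
  shows "(A * B) $$ (i, j) = (\<Sum>x<b. A $$ (i, x) * B $$ (x, j))"
  using assms by (auto simp: scalar_prod_def atLeast0LessThan intro!: sum.cong)

lemma foldl_mult_carrier:
  assumes "\<forall>k<m. M k \<in> carrier_mat (e k) (e (Suc k))" "M0 \<in> carrier_mat r0 (e 0)"
  shows "foldl (\<lambda>P k. P * M k) M0 [0..<m] \<in> carrier_mat r0 (e m)"
  using assms by (induct m) auto

lemma index_foldl_mult_units:
  fixes e :: "nat \<Rightarrow> nat"
  assumes "\<forall>k<m. \<beta> k < e (Suc k)" "r < e 0" "c < e (Suc m)"
  shows "foldl (\<lambda>P k. P * mat_unit (e k) (e (Suc k)) (\<alpha> k) (\<beta> k)) (1\<^sub>m (e 0)) [0..<Suc m] $$ (r, c)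
    = (if r = \<alpha> 0 \<and> c = \<beta> m \<and> (\<forall>k<m. \<beta> k = \<alpha> (Suc k)) then 1 else (0 :: 'a::comm_ring_1))"
  using assms(1,3)
proof (induction m arbitrary: c)
  case 0
  then show ?case
    using \<open>r < e 0\<close> by (simp add: mat_unit_def)
next
  case (Suc m)
  let ?E = "\<lambda>k. mat_unit (e k) (e (Suc k)) (\<alpha> k) (\<beta> k) :: 'a mat"
  let ?P = "foldl (\<lambda>P k. P * ?E k) (1\<^sub>m (e 0)) [0..<Suc m]"
  let ?chain = "\<forall>k<m. \<beta> k = \<alpha> (Suc k)"
  have P: "?P \<in> carrier_mat (e 0) (e (Suc m))"
    by (rule foldl_mult_carrier) (auto simp: mat_unit_def)
  have E: "?E (Suc m) \<in> carrier_mat (e (Suc m)) (e (Suc (Suc m)))"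
    by (simp add: mat_unit_def)
  have "foldl (\<lambda>P k. P * ?E k) (1\<^sub>m (e 0)) [0..<Suc (Suc m)] $$ (r, c) = (?P * ?E (Suc m)) $$ (r, c)"
    by simp
  also have "\<dots> = (\<Sum>x<e (Suc m). ?P $$ (r, x) * ?E (Suc m) $$ (x, c))"
    using \<open>r < e 0\<close> Suc.prems(2) by (rule index_mult_mat_sum[OF P E])
  also have "\<dots> = (\<Sum>x<e (Suc m). if x = \<beta> m then
      (if r = \<alpha> 0 \<and> ?chain \<and> \<beta> m = \<alpha> (Suc m) \<and> c = \<beta> (Suc m) then 1 else 0) else 0)"
  proof (intro sum.cong refl)
    fix x assume "x \<in> {..<e (Suc m)}"
    then have "?P $$ (r, x) = (if r = \<alpha> 0 \<and> x = \<beta> m \<and> ?chain then 1 else 0)"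
      and "?E (Suc m) $$ (x, c) = (if x = \<alpha> (Suc m) \<and> c = \<beta> (Suc m) then 1 else 0)"
      using Suc.IH[of x] Suc.prems by (simp_all add: mat_unit_def)
    then show "?P $$ (r, x) * ?E (Suc m) $$ (x, c) = (if x = \<beta> m then
        (if r = \<alpha> 0 \<and> ?chain \<and> \<beta> m = \<alpha> (Suc m) \<and> c = \<beta> (Suc m) then 1 else 0) else 0)"
      by auto
  qed
  also have "\<dots> = (if r = \<alpha> 0 \<and> ?chain \<and> \<beta> m = \<alpha> (Suc m) \<and> c = \<beta> (Suc m) then 1 else 0)"
    using Suc.prems by simp
  also have "\<dots> = (if r = \<alpha> 0 \<and> c = \<beta> (Suc m) \<and> (\<forall>k<Suc m. \<beta> k = \<alpha> (Suc k)) then 1 else 0)"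
    by (auto simp: All_less_Suc)
  finally show ?case .
qed

lemma mat_trace_foldl_mult_units:
  fixes e :: "nat \<Rightarrow> nat"
  assumes "\<forall>k<m. \<beta> k < e (Suc k)" "\<alpha> 0 < e 0" "e (Suc m) = e 0"
  shows "mat_trace (foldl (\<lambda>P k. P * mat_unit (e k) (e (Suc k)) (\<alpha> k) (\<beta> k)) (1\<^sub>m (e 0)) [0..<Suc m])
    = (if \<alpha> 0 = \<beta> m \<and> (\<forall>k<m. \<beta> k = \<alpha> (Suc k)) then 1 else 0)"
proof -
  let ?P = "foldl (\<lambda>P k. P * mat_unit (e k) (e (Suc k)) (\<alpha> k) (\<beta> k)) (1\<^sub>m (e 0)) [0..<Suc m] :: complex mat"
  have "?P \<in> carrier_mat (e 0) (e (Suc m))"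
    by (rule foldl_mult_carrier) (auto simp: mat_unit_def)
  then have "mat_trace ?P = (\<Sum>r<e 0. ?P $$ (r, r))"
    by (simp only: mat_trace_def carrier_matD(1))
  also have "\<dots> = (\<Sum>r<e 0. if r = \<alpha> 0 \<and> r = \<beta> m \<and> (\<forall>k<m. \<beta> k = \<alpha> (Suc k)) then 1 else 0)"
    by (intro sum.cong refl index_foldl_mult_units) (use assms in auto)
  also have "\<dots> = (\<Sum>r<e 0. if r = \<alpha> 0 then (if \<alpha> 0 = \<beta> m \<and> (\<forall>k<m. \<beta> k = \<alpha> (Suc k)) then 1 else 0) else 0)"
    by (intro sum.cong refl) auto
  also have "\<dots> = (if \<alpha> 0 = \<beta> m \<and> (\<forall>k<m. \<beta> k = \<alpha> (Suc k)) then 1 else 0)"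
    using assms(2) by simp
  finally show ?thesis .
qed

lemma index_foldl_mult_lincomb:
  fixes A :: "nat \<Rightarrow> nat \<Rightarrow> 'a::comm_ring_1 mat"
  assumes A: "\<forall>k<m. \<forall>i<d. A k i \<in> carrier_mat (e k) (e (Suc k))"
    and M0: "M0 \<in> carrier_mat r0 (e 0)" and "r < r0" "c < e m"
  shows "foldl (\<lambda>P k. P * mat_lincomb (e k) (e (Suc k)) (w k) (A k) d) M0 [0..<m] $$ (r, c)
    = (\<Sum>idx\<in>PiE {..<m} (\<lambda>_. {..<d}).
         (\<Prod>k<m. w k (idx k)) * foldl (\<lambda>P k. P * A k (idx k)) M0 [0..<m] $$ (r, c))"
  using A \<open>c < e m\<close>
proof (induction m arbitrary: c)
  case 0
  then show ?case
    by simp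
next
  case (Suc m)
  let ?B = "\<lambda>k. mat_lincomb (e k) (e (Suc k)) (w k) (A k) d"
  let ?C = "PiE {..<m} (\<lambda>_. {..<d})"
  let ?W = "\<lambda>idx. \<Prod>k<m. w k (idx k)"
  let ?PA = "\<lambda>idx. foldl (\<lambda>P k. P * A k (idx k)) M0 [0..<m]"
  have PB: "foldl (\<lambda>P k. P * ?B k) M0 [0..<m] \<in> carrier_mat r0 (e m)"
    using M0 by (intro foldl_mult_carrier) (simp_all add: mat_lincomb_def)
  have PA: "?PA idx \<in> carrier_mat r0 (e m)" if "idx \<in> ?C" for idx
    using that Suc.prems(1) M0 by (intro foldl_mult_carrier) (auto simp: PiE_iff)
  have Am: "A m i \<in> carrier_mat (e m) (e (Suc m))" if "i < d" for i
    using Suc.prems(1) that by simp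
  have Bm: "?B m \<in> carrier_mat (e m) (e (Suc m))"
    by (simp add: mat_lincomb_def)
  have "foldl (\<lambda>P k. P * ?B k) M0 [0..<Suc m] $$ (r, c) = (foldl (\<lambda>P k. P * ?B k) M0 [0..<m] * ?B m) $$ (r, c)"
    by simp
  also have "\<dots> = (\<Sum>x<e m. foldl (\<lambda>P k. P * ?B k) M0 [0..<m] $$ (r, x) * ?B m $$ (x, c))"
    using \<open>r < r0\<close> Suc.prems(2) by (rule index_mult_mat_sum[OF PB Bm])
  also have "\<dots> = (\<Sum>x<e m. (\<Sum>idx\<in>?C. ?W idx * ?PA idx $$ (r, x)) * (\<Sum>i<d. w m i * A m i $$ (x, c)))"
  proof (intro sum.cong refl)
    fix x assume "x \<in> {..<e m}"
    then show "foldl (\<lambda>P k. P * ?B k) M0 [0..<m] $$ (r, x) * ?B m $$ (x, c)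
        = (\<Sum>idx\<in>?C. ?W idx * ?PA idx $$ (r, x)) * (\<Sum>i<d. w m i * A m i $$ (x, c))"
      using Suc.IH[of x] Suc.prems by (simp add: mat_lincomb_def)
  qed
  also have "\<dots> = (\<Sum>x<e m. \<Sum>idx\<in>?C. \<Sum>i<d. ?W idx * w m i * (?PA idx $$ (r, x) * A m i $$ (x, c)))"
    unfolding sum_product by (simp only: mult_ac)
  also have "\<dots> = (\<Sum>idx\<in>?C. \<Sum>i<d. \<Sum>x<e m. ?W idx * w m i * (?PA idx $$ (r, x) * A m i $$ (x, c)))"
    by (simp only: sum.swap[of _ "{..<e m}"])
  also have "\<dots> = (\<Sum>idx\<in>?C. \<Sum>i<d. ?W idx * w m i * (\<Sum>x<e m. ?PA idx $$ (r, x) * A m i $$ (x, c)))"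
    by (simp only: sum_distrib_left)
  also have "\<dots> = (\<Sum>idx\<in>?C. \<Sum>i<d. ?W idx * w m i * (?PA idx * A m i) $$ (r, c))"
    by (intro sum.cong refl) (simp add: index_mult_mat_sum[OF PA Am \<open>r < r0\<close> Suc.prems(2), symmetric])
  also have "\<dots> = (\<Sum>i<d. \<Sum>idx\<in>?C. ?W idx * w m i * (?PA idx * A m i) $$ (r, c))"
    by (rule sum.swap)
  also have "\<dots> = (\<Sum>i<d. \<Sum>idx\<in>?C. (\<Prod>k<Suc m. w k ((idx(m := i)) k)) *
      foldl (\<lambda>P k. P * A k ((idx(m := i)) k)) M0 [0..<Suc m] $$ (r, c))"
  proof (intro sum.cong refl)
    fix i idx
    have "(\<Prod>k<Suc m. w k ((idx(m := i)) k)) = (\<Prod>k<m. w k ((idx(m := i)) k)) * w m i"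
      by simp
    also have "(\<Prod>k<m. w k ((idx(m := i)) k)) = ?W idx"
      by (intro prod.cong) auto
    finally have prod: "(\<Prod>k<Suc m. w k ((idx(m := i)) k)) = ?W idx * w m i" .
    have "foldl (\<lambda>P k. P * A k ((idx(m := i)) k)) M0 [0..<m] = ?PA idx"
      by (rule foldl_cong) auto
    then have fold: "foldl (\<lambda>P k. P * A k ((idx(m := i)) k)) M0 [0..<Suc m] = ?PA idx * A m i"
      by (simp only: upt_Suc_append[OF le0] foldl_append foldl_Cons foldl_Nil fun_upd_same)
    show "?W idx * w m i * (?PA idx * A m i) $$ (r, c) = (\<Prod>k<Suc m. w k ((idx(m := i)) k)) *
        foldl (\<lambda>P k. P * A k ((idx(m := i)) k)) M0 [0..<Suc m] $$ (r, c)"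
      unfolding prod fold ..
  qed
  also have "\<dots> = (\<Sum>idx\<in>PiE {..<Suc m} (\<lambda>_. {..<d}).
      (\<Prod>k<Suc m. w k (idx k)) * foldl (\<lambda>P k. P * A k (idx k)) M0 [0..<Suc m] $$ (r, c))"
    by (rule sum_PiE_lessThan_Suc[symmetric])
  finally show ?case .
qed

lemma mat_trace_mult:
  assumes "X \<in> carrier_mat q p" "B \<in> carrier_mat p q"
  shows "mat_trace (X * B) = (\<Sum>y<q. \<Sum>x<p. X $$ (y, x) * B $$ (x, y))"
proof -
  have "mat_trace (X * B) = (\<Sum>y<q. (X * B) $$ (y, y))"
    using assms by (simp add: mat_trace_def)
  also have "\<dots> = (\<Sum>y<q. \<Sum>x<p. X $$ (y, x) * B $$ (x, y))"
    by (intro sum.cong refl index_mult_mat_sum[OF assms]) auto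
  finally show ?thesis .
qed

lemma injective_tensor_spans_units:
  assumes "injective_tensor N d Dim A n"
    and A: "\<forall>i<d. A n i \<in> carrier_mat (Dim n) (Dim (Suc n mod N))"
    and "a < Dim n" "b < Dim (Suc n mod N)"
  shows "\<exists>c. mat_lincomb (Dim n) (Dim (Suc n mod N)) c (A n) d = mat_unit (Dim n) (Dim (Suc n mod N)) a b"
proof -
  define p q where "p = Dim n" and "q = Dim (Suc n mod N)"
  have "\<exists>c. \<forall>u\<in>{..<p} \<times> {..<q}. (\<Sum>i<d. c i * A n i $$ u) = (if u = (a, b) then 1 else 0)"
  proof (rule exists_dual_vector)
    fix X assume X: "\<forall>i<d. (\<Sum>u\<in>{..<p} \<times> {..<q}. X u * A n i $$ u) = 0"
    define Xm where "Xm = mat q p (\<lambda>(y, x). X (x, y))"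
    have "\<forall>i<d. mat_trace (Xm * A n i) = 0"
    proof (intro allI impI)
      fix i assume "i < d"
      then have "mat_trace (Xm * A n i) = (\<Sum>y<q. \<Sum>x<p. X (x, y) * A n i $$ (x, y))"
        using A by (simp add: mat_trace_mult[of _ q p] Xm_def p_def q_def)
      also have "\<dots> = (\<Sum>x<p. \<Sum>y<q. X (x, y) * A n i $$ (x, y))"
        by (rule sum.swap)
      also have "\<dots> = (\<Sum>u\<in>{..<p} \<times> {..<q}. X u * A n i $$ u)"
        unfolding sum.cartesian_product by (simp add: case_prod_beta)
      finally show "mat_trace (Xm * A n i) = 0"
        using X \<open>i < d\<close> by simp
    qed
    then have "Xm = 0\<^sub>m q p"
      using assms(1) by (simp add: injective_tensor_def Xm_def p_def q_def)
    then show "\<forall>u\<in>{..<p} \<times> {..<q}. X u = 0"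
      by (auto simp: Xm_def) (metis case_prod_conv index_mat(1) index_zero_mat(1))
  qed (use assms(3,4) in \<open>auto simp: p_def q_def\<close>)
  then obtain c where c: "\<forall>u\<in>{..<p} \<times> {..<q}. (\<Sum>i<d. c i * A n i $$ u) = (if u = (a, b) then 1 else 0)"
    by blast
  have "mat_lincomb p q c (A n) d = mat_unit p q a b"
    using c by (intro eq_matI) (auto simp: mat_lincomb_def mat_unit_def)
  then show ?thesis
    by (auto simp: p_def q_def)
qed

section \<open>Probing an MPS with injective tensors\<close>

lemma sum_PiE_Un_restrict:
  fixes u v :: "('a \<Rightarrow> 'b) \<Rightarrow> 'c::comm_semiring_1"
  assumes "A \<inter> B = {}"
  shows "(\<Sum>x\<in>PiE (A \<union> B) F. u (restrict x A) * v (restrict x B))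
    = (\<Sum>y\<in>PiE A F. u y) * (\<Sum>z\<in>PiE B F. v z)"
proof -
  have "(\<Sum>y\<in>PiE A F. u y) * (\<Sum>z\<in>PiE B F. v z) = (\<Sum>(y, z)\<in>PiE A F \<times> PiE B F. u y * v z)"
    by (simp add: sum_product sum.cartesian_product)
  also have "\<dots> = (\<Sum>x\<in>PiE (A \<union> B) F. u (restrict x A) * v (restrict x B))"
  proof (rule sum.reindex_bij_witness[of _ "\<lambda>x. (restrict x A, restrict x B)" "\<lambda>(y, z) k. if k \<in> A then y k else z k"])
    fix yz assume "yz \<in> PiE A F \<times> PiE B F"
    moreover obtain y z where "yz = (y, z)"
      by fastforce
    ultimately have "restrict (\<lambda>k. if k \<in> A then y k else z k) A = y"
      "restrict (\<lambda>k. if k \<in> A then y k else z k) B = z"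
      using assms by (auto simp: PiE_iff extensional_def fun_eq_iff)
    then show "u (restrict ((\<lambda>(y, z) k. if k \<in> A then y k else z k) yz) A) *
        v (restrict ((\<lambda>(y, z) k. if k \<in> A then y k else z k) yz) B) = (case yz of (y, z) \<Rightarrow> u y * v z)"
      using \<open>yz = (y, z)\<close> by simp
  qed (use assms in \<open>auto simp: PiE_iff extensional_def fun_eq_iff\<close>)
  finally show ?thesis ..
qed

definition interleave :: "(nat \<Rightarrow> 'a) \<Rightarrow> (nat \<Rightarrow> 'a) \<Rightarrow> nat \<Rightarrow> nat \<Rightarrow> 'a" where
  "interleave t s n = (if even n then t else s)"

lemma interleave_chain_iff:
  assumes "t \<in> PiE {..<Suc m} F" "s \<in> PiE {..<Suc m} F" and "even m \<Longrightarrow> t 0 = s 0"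
  shows "interleave t s 0 0 = interleave t s m 0 \<and>
      (\<forall>k<m. interleave t s k (Suc k) = interleave t s (Suc k) (Suc k)) \<longleftrightarrow> t = s"
proof
  assume closed: "interleave t s 0 0 = interleave t s m 0 \<and>
      (\<forall>k<m. interleave t s k (Suc k) = interleave t s (Suc k) (Suc k))"
  show "t = s"
  proof (rule PiE_ext[OF assms(1,2)])
    fix j assume "j \<in> {..<Suc m}"
    show "t j = s j"
    proof (cases j)
      case 0
      then show ?thesis
        using closed assms(3) by (cases "even m") (auto simp: interleave_def)
    next
      case (Suc k)
      then show ?thesis
        using closed \<open>j \<in> {..<Suc m}\<close> by (cases "even k") (auto simp: interleave_def)
    qed
  qed
qed (simp add: interleave_def)

locale injective_mps =
  fixes N d :: nat and Dim :: "nat \<Rightarrow> nat" and A :: "nat \<Rightarrow> nat \<Rightarrow> complex mat"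
  assumes N_pos: "0 < N"
    and tensors: "mps_tensors_ok N d Dim A"
    and Dim_pos: "\<forall>n<N. 0 < Dim n"
    and injective: "\<forall>n<N. injective_tensor N d Dim A n"
begin

definition bond :: "nat \<Rightarrow> nat" where
  "bond k = Dim (k mod N)"

lemma A_carrier: "k < N \<Longrightarrow> i < d \<Longrightarrow> A k i \<in> carrier_mat (bond k) (bond (Suc k))"
  using tensors by (simp add: mps_tensors_ok_def bond_def)

definition unit_preimage :: "nat \<Rightarrow> nat \<Rightarrow> nat \<Rightarrow> nat \<Rightarrow> complex" where
  "unit_preimage n a b = (SOME c. mat_lincomb (bond n) (bond (Suc n)) c (A n) d = mat_unit (bond n) (bond (Suc n)) a b)"

lemma mat_lincomb_unit_preimage:
  assumes "n < N" "a < bond n" "b < bond (Suc n)"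
  shows "mat_lincomb (bond n) (bond (Suc n)) (unit_preimage n a b) (A n) d = mat_unit (bond n) (bond (Suc n)) a b"
proof -
  have "\<exists>c. mat_lincomb (bond n) (bond (Suc n)) c (A n) d = mat_unit (bond n) (bond (Suc n)) a b"
    using injective_tensor_spans_units[of N d Dim A n a b] injective tensors assms
    by (simp add: bond_def mps_tensors_ok_def)
  then show ?thesis
    unfolding unit_preimage_def by (rule someI_ex)
qed

text \<open>For odd \<open>N\<close> both neighbours of the bond at site 0 are even sites, so that bond index is read
  off \<open>t\<close> on both sides and never compared with \<open>s\<close>; it is frozen to 0.\<close>

definition configs :: "(nat \<Rightarrow> nat) set" where
  "configs = PiE {..<N} (\<lambda>n. if odd N \<and> n = 0 then {0} else {..<Dim n})"

lemma card_configs: "card configs = (\<Prod>n \<in> {(if even N then 0 else 1)..<N}. Dim n)"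
proof -
  have "card configs = (\<Prod>n<N. card (if odd N \<and> n = 0 then {0} else {..<Dim n}))"
    by (simp add: configs_def card_PiE)
  also have "\<dots> = (\<Prod>n<N. if odd N \<and> n = 0 then 1 else Dim n)"
    by (intro prod.cong) auto
  also have "\<dots> = (\<Prod>n \<in> {(if even N then 0 else 1)..<N}. Dim n)"
  proof (cases "even N")
    case True
    then show ?thesis
      by (simp add: lessThan_atLeast0)
  next
    case False
    have "{..<N} = insert 0 {1..<N}"
      using N_pos by auto
    then have "(\<Prod>n<N. if odd N \<and> n = 0 then 1 else Dim n) = (\<Prod>n\<in>{1..<N}. if odd N \<and> n = 0 then 1 else Dim n)"
      using False by simp
    also have "\<dots> = (\<Prod>n\<in>{1..<N}. Dim n)"
      by (intro prod.cong) auto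
    finally show ?thesis
      using False by simp
  qed
  finally show ?thesis .
qed

lemma configs_less_bond: "t \<in> configs \<Longrightarrow> k < N \<Longrightarrow> t k < bond k"
  using Dim_pos by (auto simp: configs_def bond_def PiE_iff split: if_splits)

lemma bond_mod: "bond (k mod N) = bond k"
  by (simp add: bond_def)

definition probe :: "(nat \<Rightarrow> nat) \<Rightarrow> (nat \<Rightarrow> nat) \<Rightarrow> nat \<Rightarrow> nat \<Rightarrow> complex" where
  "probe t s n = unit_preimage n (interleave t s n n) (interleave t s n (Suc n mod N))"

lemma interleave_less_bond: "t \<in> configs \<Longrightarrow> s \<in> configs \<Longrightarrow> interleave t s k (j mod N) < bond j"
  using N_pos configs_less_bond[of t "j mod N"] configs_less_bond[of s "j mod N"] bond_mod[of j]
  by (simp add: interleave_def)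

lemma mat_lincomb_probe:
  assumes "t \<in> configs" "s \<in> configs" "k < N"
  shows "mat_lincomb (bond k) (bond (Suc k)) (probe t s k) (A k) d
    = mat_unit (bond k) (bond (Suc k)) (interleave t s k k) (interleave t s k (Suc k mod N))"
  unfolding probe_def using interleave_less_bond[OF assms(1,2), of k k] \<open>k < N\<close>
  by (intro mat_lincomb_unit_preimage interleave_less_bond assms) simp_all

definition pairing :: "((nat \<Rightarrow> nat) \<Rightarrow> complex) \<Rightarrow> (nat \<Rightarrow> nat) \<Rightarrow> (nat \<Rightarrow> nat) \<Rightarrow> complex" where
  "pairing psi t s = (\<Sum>idx\<in>PiE {..<N} (\<lambda>_. {..<d}). (\<Prod>n<N. probe t s n (idx n)) * psi idx)"

lemma pairing_mps_coeff_eq_trace: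
  "pairing (mps_coeff N Dim A) t s
    = mat_trace (foldl (\<lambda>P k. P * mat_lincomb (bond k) (bond (Suc k)) (probe t s k) (A k) d) (1\<^sub>m (bond 0)) [0..<N])"
proof -
  have A: "\<forall>k<N. \<forall>i<d. A k i \<in> carrier_mat (bond k) (bond (Suc k))"
    using A_carrier by blast
  have bond: "bond N = bond 0"
    using bond_mod[of N] bond_mod[of 0] by simp
  define P where "P idx = foldl (\<lambda>P k. P * A k (idx k)) (1\<^sub>m (bond 0)) [0..<N]" for idx
  have P: "P idx \<in> carrier_mat (bond 0) (bond N)" if "idx \<in> PiE {..<N} (\<lambda>_. {..<d})" for idx
    unfolding P_def using that by (intro foldl_mult_carrier) (auto simp: A_carrier PiE_iff)
  have "mps_coeff N Dim A idx = (\<Sum>r<bond 0. P idx $$ (r, r))" if "idx \<in> PiE {..<N} (\<lambda>_. {..<d})" for idx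
    using carrier_matD(1)[OF P[OF that]] by (simp add: mps_coeff_def mat_trace_def P_def bond_def)
  then have "pairing (mps_coeff N Dim A) t s
      = (\<Sum>idx\<in>PiE {..<N} (\<lambda>_. {..<d}). (\<Prod>n<N. probe t s n (idx n)) * (\<Sum>r<bond 0. P idx $$ (r, r)))"
    unfolding pairing_def by (intro sum.cong refl) simp
  also have "\<dots> = (\<Sum>r<bond 0. \<Sum>idx\<in>PiE {..<N} (\<lambda>_. {..<d}). (\<Prod>n<N. probe t s n (idx n)) * P idx $$ (r, r))"
    unfolding sum_distrib_left by (rule sum.swap)
  also have "\<dots> = (\<Sum>r<bond 0. foldl (\<lambda>P k. P * mat_lincomb (bond k) (bond (Suc k)) (probe t s k) (A k) d)
      (1\<^sub>m (bond 0)) [0..<N] $$ (r, r))"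
    unfolding P_def
    by (intro sum.cong refl index_foldl_mult_lincomb[OF A, symmetric]) (simp_all add: bond)
  also have "\<dots> = mat_trace (foldl (\<lambda>P k. P * mat_lincomb (bond k) (bond (Suc k)) (probe t s k) (A k) d)
      (1\<^sub>m (bond 0)) [0..<N])"
  proof -
    have "foldl (\<lambda>P k. P * mat_lincomb (bond k) (bond (Suc k)) (probe t s k) (A k) d) (1\<^sub>m (bond 0)) [0..<N]
        \<in> carrier_mat (bond 0) (bond N)"
      by (intro foldl_mult_carrier) (auto simp: mat_lincomb_def)
    then show ?thesis
      by (simp add: mat_trace_def bond)
  qed
  finally show ?thesis .
qed

lemma pairing_mps_coeff:
  assumes t: "t \<in> configs" and s: "s \<in> configs"
  shows "pairing (mps_coeff N Dim A) t s = (if t = s then 1 else 0)"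
proof -
  obtain m where N: "N = Suc m"
    using N_pos gr0_implies_Suc by blast
  define \<alpha> where "\<alpha> n = interleave t s n n" for n
  define \<beta> where "\<beta> n = interleave t s n (Suc n mod N)" for n
  have "pairing (mps_coeff N Dim A) t s
      = mat_trace (foldl (\<lambda>P k. P * mat_lincomb (bond k) (bond (Suc k)) (probe t s k) (A k) d) (1\<^sub>m (bond 0)) [0..<N])"
    by (rule pairing_mps_coeff_eq_trace)
  also have "\<dots> = mat_trace (foldl (\<lambda>P k. P * mat_unit (bond k) (bond (Suc k)) (\<alpha> k) (\<beta> k)) (1\<^sub>m (bond 0)) [0..<Suc m])"
    unfolding N[symmetric] \<alpha>_def \<beta>_def
    by (intro arg_cong[where f = mat_trace] foldl_cong) (auto simp: mat_lincomb_probe t s)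
  also have "\<dots> = (if \<alpha> 0 = \<beta> m \<and> (\<forall>k<m. \<beta> k = \<alpha> (Suc k)) then 1 else 0)"
  proof (rule mat_trace_foldl_mult_units)
    show "\<forall>k<m. \<beta> k < bond (Suc k)" "\<alpha> 0 < bond 0"
      using interleave_less_bond[OF t s, of 0 0] by (simp_all add: \<alpha>_def \<beta>_def interleave_less_bond t s)
    show "bond (Suc m) = bond 0"
      using bond_mod[of N] bond_mod[of 0] by (simp add: N)
  qed
  also have "\<dots> = (if t = s then 1 else 0)"
  proof -
    have "\<alpha> 0 = \<beta> m \<and> (\<forall>k<m. \<beta> k = \<alpha> (Suc k)) \<longleftrightarrow>
        interleave t s 0 0 = interleave t s m 0 \<and>
        (\<forall>k<m. interleave t s k (Suc k) = interleave t s (Suc k) (Suc k))"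
      by (simp add: \<alpha>_def \<beta>_def N)
    also have "\<dots> \<longleftrightarrow> t = s"
    proof (rule interleave_chain_iff)
      show "t \<in> PiE {..<Suc m} (\<lambda>n. if odd N \<and> n = 0 then {0} else {..<Dim n})"
        "s \<in> PiE {..<Suc m} (\<lambda>n. if odd N \<and> n = 0 then {0} else {..<Dim n})"
        using t s by (simp_all add: configs_def N[symmetric])
      have "odd N \<Longrightarrow> t 0 = 0 \<and> s 0 = 0"
        using PiE_mem[OF t[unfolded configs_def], of 0] PiE_mem[OF s[unfolded configs_def], of 0] N_pos
        by auto
      then show "even m \<Longrightarrow> t 0 = s 0"
        by (simp add: N)
    qed
    finally show ?thesis
      by simp
  qed
  finally show ?thesis .
qed

lemma pairing_factorizes:
  assumes "schmidt_rank_le N d psi {n. n < N \<and> even n} D"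
  shows "\<exists>F G. \<forall>t s. pairing psi t s = (\<Sum>j<D. F j t * G j s)"
proof -
  define S Sc where "S = {n. n < N \<and> even n}" and "Sc = {n. n < N \<and> odd n}"
  have disj: "S \<inter> Sc = {}" and un: "{..<N} = S \<union> Sc" and Sc: "{0..<N} - S = Sc"
    by (auto simp: S_def Sc_def)
  obtain f g where fg: "\<And>idx. \<forall>k<N. idx k < d \<Longrightarrow>
      psi idx = (\<Sum>j<D. f j (restr S idx) * g j (restr Sc idx))"
    using assms unfolding schmidt_rank_le_def S_def[symmetric] Sc by blast
  define F where "F j t = (\<Sum>y\<in>PiE S (\<lambda>_. {..<d}). (\<Prod>n\<in>S. probe t t n (y n)) * f j (restr S y))" for j t
  define G where "G j s = (\<Sum>z\<in>PiE Sc (\<lambda>_. {..<d}). (\<Prod>n\<in>Sc. probe s s n (z n)) * g j (restr Sc z))" for j s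
  have "pairing psi t s = (\<Sum>j<D. F j t * G j s)" for t s
  proof -
    define u where "u j y = (\<Prod>n\<in>S. probe t t n (y n)) * f j (restr S y)" for j y
    define v where "v j z = (\<Prod>n\<in>Sc. probe s s n (z n)) * g j (restr Sc z)" for j z
    have probes: "(\<Prod>n<N. probe t s n (idx n)) =
        (\<Prod>n\<in>S. probe t t n (restrict idx S n)) * (\<Prod>n\<in>Sc. probe s s n (restrict idx Sc n))" for idx
      unfolding un by (subst prod.union_disjoint) (auto simp: disj S_def Sc_def probe_def interleave_def
          intro!: arg_cong2[where f = "(*)"] prod.cong)
    have "pairing psi t s = (\<Sum>idx\<in>PiE (S \<union> Sc) (\<lambda>_. {..<d}). \<Sum>j<D. u j (restrict idx S) * v j (restrict idx Sc))"
      unfolding pairing_def un[symmetric]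
    proof (intro sum.cong refl)
      fix idx assume "idx \<in> PiE {..<N} (\<lambda>_. {..<d})"
      then have psi: "psi idx = (\<Sum>j<D. f j (restr S (restrict idx S)) * g j (restr Sc (restrict idx Sc)))"
        by (simp add: fg PiE_iff restr_def cong: if_cong)
      show "(\<Prod>n<N. probe t s n (idx n)) * psi idx = (\<Sum>j<D. u j (restrict idx S) * v j (restrict idx Sc))"
        unfolding probes psi u_def v_def sum_distrib_left by (simp only: mult_ac)
    qed
    also have "\<dots> = (\<Sum>j<D. \<Sum>idx\<in>PiE (S \<union> Sc) (\<lambda>_. {..<d}). u j (restrict idx S) * v j (restrict idx Sc))"
      by (rule sum.swap)
    also have "\<dots> = (\<Sum>j<D. F j t * G j s)"
      unfolding F_def G_def u_def[symmetric] v_def[symmetric]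
      by (intro sum.cong refl sum_PiE_Un_restrict[OF disj])
    finally show ?thesis .
  qed
  then show ?thesis
    by blast
qed

end

theorem proposition5:
  fixes d D :: nat
  shows "\<exists>N0. \<forall>N \<ge> N0. \<forall>(Dim :: nat \<Rightarrow> nat) (A :: nat \<Rightarrow> nat \<Rightarrow> complex mat).
     mps_tensors_ok N d Dim A \<and> (\<forall>n<N. 0 < Dim n) \<and>
     (\<forall>n<N. injective_tensor N d Dim A n) \<and>
     exact_MPS_up N d (mps_coeff N Dim A) D
     \<longrightarrow> (\<Prod>n \<in> {(if even N then 0 else 1)..<N}. Dim n) \<le> D"
proof (intro exI[of _ 1] allI impI)
  fix N Dim A
  assume "1 \<le> N" and H: "mps_tensors_ok N d Dim A \<and> (\<forall>n<N. 0 < Dim n) \<and>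
     (\<forall>n<N. injective_tensor N d Dim A n) \<and> exact_MPS_up N d (mps_coeff N Dim A) D"
  then interpret injective_mps N d Dim A
    by unfold_locales auto
  have "{n. n < N \<and> even n} \<subseteq> {0..<N}"
    by auto
  with H have "schmidt_rank_le N d (mps_coeff N Dim A) {n. n < N \<and> even n} D"
    by (simp add: exact_MPS_up_def)
  then obtain F G where "\<And>t s. pairing (mps_coeff N Dim A) t s = (\<Sum>j<D. F j t * G j s)"
    using pairing_factorizes by blast
  then have "card configs \<le> D"
    using pairing_mps_coeff
    by (intro card_le_if_biorthogonal[where F = F and G = G]) (simp_all add: configs_def finite_PiE)
  then show "(\<Prod>n \<in> {(if even N then 0 else 1)..<N}. Dim n) \<le> D"
    by (simp add: card_configs)
qed

end
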